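(* Let $p \in \beta\mathbb{N}$. If $p$ is prime with respect to $\tilde{\mid}$-divisibility, then $p$ is prime with respect to each of $\mid_l$, $\mid_r$ and $\mid_m$ divisibility.
   Context: $\mathbb{N}=\{1,2,3,\dots\}$ with the discrete topology; $\beta\mathbb{N}$ is its Stone–Čech compactification, identified with the set of ultrafilters on $\mathbb{N}$, where each $n\in\mathbb{N}$ is identified with the principal ultrafilter at $n$. Multiplication on $\beta\mathbb{N}$: for $x,y\in\beta\mathbb{N}$ and $A\subseteq\mathbb{N}$, $A\in x\cdot y$ iff $\{n\in\mathbb{N}: A/n\in y\}\in x$, where $A/n=\{m\in\mathbb{N}: mn\in A\}$. Divisibilities on $\beta\mathbb{N}$: $x\mid_l y$ iff $y=zx$ for some $z\in\beta\mathbb{N}$; $x\mid_r y$ iff $y=xz$ for some $z\in\beta\mathbb{N}$; $x\mid_m y$ iff $y=zxw$ for some $z,w\in\beta\mathbb{N}$; $x\,\tilde{\mid}\,y$ iff for every $A\in x$, the set $\{n\in\mathbb{N}:\exists a\in A,\ a\mid n\}$ belongs to $y$. An element $p\in\beta\mathbb{N}\setminus\{1\}$ is prime with respect to a given divisibility relation if the only elements dividing $p$ in that relation are $1$ and $p$. *)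

theory Defs
  imports Main
begin

definition Npos :: "nat set" where
  "Npos = {n. 1 \<le> n}"

text \<open>Points of the Stone-Cech compactification beta N: ultrafilters on Npos,
  represented as families of subsets of Npos.\<close>
definition ultrafilter_N :: "nat set set \<Rightarrow> bool" where
  "ultrafilter_N U \<longleftrightarrow>
     (\<forall>A\<in>U. A \<subseteq> Npos) \<and> Npos \<in> U \<and> {} \<notin> U \<and>
     (\<forall>A\<in>U. \<forall>B\<in>U. A \<inter> B \<in> U) \<and>
     (\<forall>A\<in>U. \<forall>B. A \<subseteq> B \<and> B \<subseteq> Npos \<longrightarrow> B \<in> U) \<and>
     (\<forall>A. A \<subseteq> Npos \<longrightarrow> A \<in> U \<or> Npos - A \<in> U)"

text \<open>The principal ultrafilter at n (identified with n).\<close>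
definition principal_N :: "nat \<Rightarrow> nat set set" where
  "principal_N n = {A. A \<subseteq> Npos \<and> n \<in> A}"

definition sdiv :: "nat set \<Rightarrow> nat \<Rightarrow> nat set" where
  "sdiv A n = {m \<in> Npos. m * n \<in> A}"

definition bmult :: "nat set set \<Rightarrow> nat set set \<Rightarrow> nat set set" where
  "bmult x y = {A. A \<subseteq> Npos \<and> {n \<in> Npos. sdiv A n \<in> y} \<in> x}"

definition ldvd :: "nat set set \<Rightarrow> nat set set \<Rightarrow> bool" where
  "ldvd x y \<longleftrightarrow> (\<exists>z. ultrafilter_N z \<and> y = bmult z x)"

definition rdvd :: "nat set set \<Rightarrow> nat set set \<Rightarrow> bool" where
  "rdvd x y \<longleftrightarrow> (\<exists>z. ultrafilter_N z \<and> y = bmult x z)"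

definition mdvd :: "nat set set \<Rightarrow> nat set set \<Rightarrow> bool" where
  "mdvd x y \<longleftrightarrow> (\<exists>z w. ultrafilter_N z \<and> ultrafilter_N w \<and> y = bmult (bmult z x) w)"

definition tdvd :: "nat set set \<Rightarrow> nat set set \<Rightarrow> bool" where
  "tdvd x y \<longleftrightarrow> (\<forall>A\<in>x. {n \<in> Npos. \<exists>a\<in>A. a dvd n} \<in> y)"

definition prime_wrt :: "(nat set set \<Rightarrow> nat set set \<Rightarrow> bool) \<Rightarrow> nat set set \<Rightarrow> bool" where
  "prime_wrt R p \<longleftrightarrow> p \<noteq> principal_N 1 \<and>
     (\<forall>x. ultrafilter_N x \<and> R x p \<longrightarrow> x = principal_N 1 \<or> x = p)"

end

theory Submission
  imports Defs
begin

text \<open>Let \<open>multiples A\<close> be the set of multiples of elements of \<open>A\<close>, so that \<open>x \<tilde>| y\<close> says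
  \<open>multiples A \<in> y\<close> for all \<open>A \<in> x\<close>. A set \<open>M = multiples A\<close> is closed under multiplication by
  positive integers, hence \<open>M \<subseteq> M/k\<close> for every \<open>k\<close> and \<open>M/m = \<nat>\<close> for \<open>m \<in> M\<close>. The first
  fact gives \<open>M \<in> z x\<close> and the second \<open>M \<in> x z\<close> whenever \<open>M \<in> x\<close>; so \<open>x\<close> \<open>\<tilde>|\<close>-divides its
  left and right multiples, and, \<open>\<tilde>|\<close> being transitive and \<open>\<beta>\<nat>\<close> closed under multiplication,
  also \<open>z x w\<close>. Hence every \<open>|\<^sub>l\<close>-, \<open>|\<^sub>r\<close>- or \<open>|\<^sub>m\<close>-divisor of \<open>p\<close> is a \<open>\<tilde>|\<close>-divisor of \<open>p\<close>.\<close>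

lemma ultrafilter_N_subset_Npos: "ultrafilter_N x \<Longrightarrow> A \<in> x \<Longrightarrow> A \<subseteq> Npos"
  unfolding ultrafilter_N_def by (elim conjE) blast

lemma ultrafilter_N_Npos: "ultrafilter_N x \<Longrightarrow> Npos \<in> x"
  unfolding ultrafilter_N_def by (elim conjE) blast

lemma ultrafilter_N_empty: "ultrafilter_N x \<Longrightarrow> {} \<notin> x"
  unfolding ultrafilter_N_def by (elim conjE) blast

lemma ultrafilter_N_Int: "ultrafilter_N x \<Longrightarrow> A \<in> x \<Longrightarrow> B \<in> x \<Longrightarrow> A \<inter> B \<in> x"
  unfolding ultrafilter_N_def by (elim conjE) blast

lemma ultrafilter_N_mono: "ultrafilter_N x \<Longrightarrow> A \<in> x \<Longrightarrow> A \<subseteq> B \<Longrightarrow> B \<subseteq> Npos \<Longrightarrow> B \<in> x"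
  unfolding ultrafilter_N_def by (elim conjE) blast

lemma ultrafilter_N_Diff: "ultrafilter_N x \<Longrightarrow> A \<subseteq> Npos \<Longrightarrow> A \<notin> x \<Longrightarrow> Npos - A \<in> x"
  unfolding ultrafilter_N_def by (elim conjE) blast

lemma ultrafilter_N_Int_iff:
  "ultrafilter_N x \<Longrightarrow> A \<subseteq> Npos \<Longrightarrow> B \<subseteq> Npos \<Longrightarrow> A \<inter> B \<in> x \<longleftrightarrow> A \<in> x \<and> B \<in> x"
  by (meson Int_lower1 Int_lower2 ultrafilter_N_Int ultrafilter_N_mono)

lemma ultrafilter_NI:
  assumes "\<And>A. A \<in> x \<Longrightarrow> A \<subseteq> Npos" and "Npos \<in> x" and "{} \<notin> x"
    and "\<And>A B. A \<in> x \<Longrightarrow> B \<in> x \<Longrightarrow> A \<inter> B \<in> x"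
    and "\<And>A B. A \<in> x \<Longrightarrow> A \<subseteq> B \<Longrightarrow> B \<subseteq> Npos \<Longrightarrow> B \<in> x"
    and "\<And>A. A \<subseteq> Npos \<Longrightarrow> A \<in> x \<or> Npos - A \<in> x"
  shows "ultrafilter_N x"
  unfolding ultrafilter_N_def using assms by (intro conjI ballI allI impI) auto

lemma mult_mem_Npos: "m \<in> Npos \<Longrightarrow> n \<in> Npos \<Longrightarrow> m * n \<in> Npos"
  unfolding Npos_def by (simp add: Suc_le_eq)

lemma sdiv_subset_Npos: "sdiv A n \<subseteq> Npos"
  by (auto simp: sdiv_def)

lemma sdiv_Npos: "n \<in> Npos \<Longrightarrow> sdiv Npos n = Npos"
  by (auto simp: sdiv_def mult_mem_Npos)

lemma sdiv_empty: "sdiv {} n = {}"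
  by (simp add: sdiv_def)

lemma sdiv_Int: "sdiv (A \<inter> B) n = sdiv A n \<inter> sdiv B n"
  by (auto simp: sdiv_def)

lemma sdiv_mono: "A \<subseteq> B \<Longrightarrow> sdiv A n \<subseteq> sdiv B n"
  by (auto simp: sdiv_def)

lemma sdiv_Npos_Diff: "n \<in> Npos \<Longrightarrow> sdiv (Npos - A) n = Npos - sdiv A n"
  by (auto simp: sdiv_def mult_mem_Npos)

lemma ultrafilter_N_bmult:
  assumes x: "ultrafilter_N x" and y: "ultrafilter_N y"
  shows "ultrafilter_N (bmult x y)"
proof -
  define T where "T B = {n \<in> Npos. sdiv B n \<in> y}" for B
  have mem_bmult: "B \<in> bmult x y \<longleftrightarrow> B \<subseteq> Npos \<and> T B \<in> x" for B
    by (simp add: bmult_def T_def)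
  have T_Npos: "T Npos = Npos"
    using ultrafilter_N_Npos[OF y] by (auto simp: T_def sdiv_Npos)
  have T_empty: "T {} = {}"
    using ultrafilter_N_empty[OF y] by (simp add: T_def sdiv_empty)
  have T_Int: "T (A \<inter> B) = T A \<inter> T B" for A B
    unfolding T_def sdiv_Int ultrafilter_N_Int_iff[OF y sdiv_subset_Npos sdiv_subset_Npos] by blast
  have T_mono: "T A \<subseteq> T B" if "A \<subseteq> B" for A B
    unfolding T_def using ultrafilter_N_mono[OF y _ sdiv_mono[OF that] sdiv_subset_Npos] by blast
  have T_Diff: "Npos - T A \<subseteq> T (Npos - A)" for A
    unfolding T_def using ultrafilter_N_Diff[OF y sdiv_subset_Npos] by (auto simp: sdiv_Npos_Diff)
  have T_subset: "T A \<subseteq> Npos" for A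
    by (auto simp: T_def)
  show ?thesis
  proof (rule ultrafilter_NI; unfold mem_bmult)
    show "Npos \<subseteq> Npos \<and> T Npos \<in> x"
      using ultrafilter_N_Npos[OF x] T_Npos by simp
    show "\<not> ({} \<subseteq> Npos \<and> T {} \<in> x)"
      using ultrafilter_N_empty[OF x] T_empty by simp
    show "A \<subseteq> Npos" if "A \<subseteq> Npos \<and> T A \<in> x" for A
      using that by blast
    show "A \<inter> B \<subseteq> Npos \<and> T (A \<inter> B) \<in> x"
      if "A \<subseteq> Npos \<and> T A \<in> x" "B \<subseteq> Npos \<and> T B \<in> x" for A B
      unfolding T_Int using that ultrafilter_N_Int[OF x] by blast
    show "B \<subseteq> Npos \<and> T B \<in> x" if "A \<subseteq> Npos \<and> T A \<in> x" "A \<subseteq> B" "B \<subseteq> Npos" for A B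
      using that ultrafilter_N_mono[OF x _ T_mono[OF that(2)] T_subset] by blast
    show "A \<subseteq> Npos \<and> T A \<in> x \<or> Npos - A \<subseteq> Npos \<and> T (Npos - A) \<in> x"
      if "A \<subseteq> Npos" for A
      using that ultrafilter_N_Diff[OF x T_subset] ultrafilter_N_mono[OF x _ T_Diff T_subset] by blast
  qed
qed

definition multiples :: "nat set \<Rightarrow> nat set" where
  "multiples A = {n \<in> Npos. \<exists>a\<in>A. a dvd n}"

lemma tdvd_iff_multiples: "tdvd x y \<longleftrightarrow> (\<forall>A\<in>x. multiples A \<in> y)"
  by (simp add: tdvd_def multiples_def)

lemma multiples_subset_Npos: "multiples A \<subseteq> Npos"
  by (auto simp: multiples_def)

lemma subset_multiples: "A \<subseteq> Npos \<Longrightarrow> A \<subseteq> multiples A"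
  unfolding multiples_def using dvd_refl by blast

lemma multiples_multiples: "multiples (multiples A) = multiples A"
proof
  show "multiples (multiples A) \<subseteq> multiples A"
    by (auto simp: multiples_def intro: dvd_trans)
  show "multiples A \<subseteq> multiples (multiples A)"
    by (rule subset_multiples[OF multiples_subset_Npos])
qed

lemma mult_mem_multiples: "n \<in> multiples A \<Longrightarrow> k \<in> Npos \<Longrightarrow> k * n \<in> multiples A"
  unfolding multiples_def using mult_mem_Npos dvd_mult by blast

lemma multiples_subset_sdiv: "k \<in> Npos \<Longrightarrow> multiples A \<subseteq> sdiv (multiples A) k"
  using mult_mem_multiples multiples_subset_Npos by (fastforce simp: sdiv_def mult.commute)

lemma sdiv_multiples: "n \<in> multiples A \<Longrightarrow> sdiv (multiples A) n = Npos"
  using mult_mem_multiples by (auto simp: sdiv_def)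

lemma multiples_mem_bmult_left:
  assumes "ultrafilter_N z" and "ultrafilter_N x" and "multiples A \<in> x"
  shows "multiples A \<in> bmult z x"
proof -
  have "sdiv (multiples A) k \<in> x" if "k \<in> Npos" for k
    using ultrafilter_N_mono[OF assms(2,3) multiples_subset_sdiv[OF that] sdiv_subset_Npos] .
  then have "{k \<in> Npos. sdiv (multiples A) k \<in> x} = Npos"
    by blast
  then show ?thesis
    using ultrafilter_N_Npos[OF assms(1)] multiples_subset_Npos by (simp add: bmult_def)
qed

lemma multiples_mem_bmult_right:
  assumes "ultrafilter_N z" and "ultrafilter_N x" and "multiples A \<in> x"
  shows "multiples A \<in> bmult x z"
proof -
  have "multiples A \<subseteq> {n \<in> Npos. sdiv (multiples A) n \<in> z}"
    using multiples_subset_Npos[of A] ultrafilter_N_Npos[OF assms(1)] by (auto simp: sdiv_multiples)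
  then have "{n \<in> Npos. sdiv (multiples A) n \<in> z} \<in> x"
    using ultrafilter_N_mono[OF assms(2,3)] by blast
  then show ?thesis
    using multiples_subset_Npos by (simp add: bmult_def)
qed

lemma multiples_mem:
  assumes "ultrafilter_N x" and "A \<in> x"
  shows "multiples A \<in> x"
  by (rule ultrafilter_N_mono[OF assms subset_multiples[OF ultrafilter_N_subset_Npos[OF assms]]
        multiples_subset_Npos])

lemma tdvd_bmult_left:
  assumes "ultrafilter_N z" and "ultrafilter_N x"
  shows "tdvd x (bmult z x)"
  unfolding tdvd_iff_multiples using multiples_mem_bmult_left[OF assms multiples_mem[OF assms(2)]] by blast

lemma tdvd_bmult_right:
  assumes "ultrafilter_N z" and "ultrafilter_N x"
  shows "tdvd x (bmult x z)"
  unfolding tdvd_iff_multiples using multiples_mem_bmult_right[OF assms multiples_mem[OF assms(2)]] by blast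

lemma tdvd_trans:
  assumes "tdvd x y" and "tdvd y w"
  shows "tdvd x w"
  unfolding tdvd_iff_multiples
proof
  fix A assume "A \<in> x"
  then have "multiples A \<in> y"
    using assms(1) by (simp add: tdvd_iff_multiples)
  then have "multiples (multiples A) \<in> w"
    using assms(2) by (simp add: tdvd_iff_multiples)
  then show "multiples A \<in> w"
    by (simp only: multiples_multiples)
qed

lemma ldvd_imp_tdvd: "ultrafilter_N x \<Longrightarrow> ldvd x y \<Longrightarrow> tdvd x y"
  unfolding ldvd_def using tdvd_bmult_left by blast

lemma rdvd_imp_tdvd: "ultrafilter_N x \<Longrightarrow> rdvd x y \<Longrightarrow> tdvd x y"
  unfolding rdvd_def using tdvd_bmult_right by blast

lemma mdvd_imp_tdvd:
  assumes x: "ultrafilter_N x" and "mdvd x y"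
  shows "tdvd x y"
proof -
  obtain z w where z: "ultrafilter_N z" and w: "ultrafilter_N w" and y: "y = bmult (bmult z x) w"
    using assms(2) unfolding mdvd_def by blast
  have "tdvd x (bmult z x)"
    using tdvd_bmult_left[OF z x] .
  moreover have "tdvd (bmult z x) (bmult (bmult z x) w)"
    using tdvd_bmult_right[OF w ultrafilter_N_bmult[OF z x]] .
  ultimately show ?thesis
    unfolding y by (rule tdvd_trans)
qed

lemma prime_wrt_subrelation:
  assumes "prime_wrt S p" and "\<And>x. ultrafilter_N x \<Longrightarrow> R x p \<Longrightarrow> S x p"
  shows "prime_wrt R p"
  using assms unfolding prime_wrt_def by blast

theorem lemma1p4:
  assumes "ultrafilter_N p"
    and "prime_wrt tdvd p"
  shows "prime_wrt ldvd p \<and> prime_wrt rdvd p \<and> prime_wrt mdvd p"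
  using prime_wrt_subrelation[OF assms(2)] ldvd_imp_tdvd rdvd_imp_tdvd mdvd_imp_tdvd by blast

end
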